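(* Let $N=\{1,\dots,n\}$, let $\tilde Q\in\mathbb{R}^{n\times n}$ be symmetric positive definite with smallest eigenvalue $\mu>0$ and spectral norm $\|\tilde Q\|$, $\tilde d\in\mathbb{R}^n$, and $a,b\in\mathbb{R}^n$ with $b\le a$ componentwise. Let $A,B\subseteq N$ be disjoint, $I=N\setminus(A\cup B)$, and let $(x,s,t)$ be the KKT solution for $(A,B)$. Let $C=\{i: x_i<b_i \text{ or } s_i<0\}$, $D=\{i: x_i>a_i \text{ or } t_i>0\}$, and let $(y,u,v)$ be the KKT solution for $(C,D)$. Define $S=\{i\in A: s_i\ge0\}$, $T=\{i\in B: t_i\le 0\}$, $U=\{i\in I: x_i<b_i\}$, $V=\{i\in I: x_i>a_i\}$, $W=U\cup V$, $\overline W=N\setminus W$, $R=I\setminus W$, $K=\{i\in S\cup T\cup R: y_i<b_i\}$, $L=\{i\in S\cup T\cup R: y_i>a_i\}$ and $z=y-x$. Then for all $c,d\ge 0$, $$2\big(L_{c,d}(y,u,v)-L_{c,d}(x,s,t)\big)\le\|\tilde Q\|\,\|z_W\|^2-\mu\|z_{\overline W}\|^2+c\|z_K\|^2+d\|z_L\|^2-c\|z_U\|^2-d\|z_V\|^2.$$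
   Context: For disjoint $A_1,A_2\subseteq N$, the KKT solution for $(A_1,A_2)$ is the unique triple $(x,s,t)\in(\mathbb{R}^n)^3$ with $x_{A_1}=b_{A_1}$, $x_{A_2}=a_{A_2}$, $s_i=0$ for $i\notin A_1$, $t_i=0$ for $i\notin A_2$, and $\tilde Qx+\tilde d+s+t=0$. The merit function is $L_{c,d}(x,s,t)=\tilde J(x)+\frac c2\|g(x)\|^2+\frac d2\|h(x)\|^2$ with $\tilde J(x)=\tfrac12x^{\top}\tilde Qx+\tilde d^{\top}x$, $g(x)=\max(b-x,0)$, $h(x)=\max(x-a,0)$ componentwise. For $M\subseteq N$, $z_M$ is the subvector of $z$ indexed by $M$; $\|\cdot\|$ is the Euclidean norm. *)

theory Defs
  imports "HOL-Analysis.Analysis"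
begin

text \<open>Vectors in R^n are modelled as real^'n with a finite index type 'n; N = UNIV.\<close>

definition is_eigenvalue :: "real^'n^'n \<Rightarrow> real \<Rightarrow> bool" where
  "is_eigenvalue Q lam \<longleftrightarrow> (\<exists>v. v \<noteq> 0 \<and> Q *v v = lam *\<^sub>R v)"

definition smallest_eigenvalue :: "real^'n^'n \<Rightarrow> real \<Rightarrow> bool" where
  "smallest_eigenvalue Q \<mu> \<longleftrightarrow> is_eigenvalue Q \<mu> \<and> (\<forall>lam. is_eigenvalue Q lam \<longrightarrow> \<mu> \<le> lam)"

definition pos_def :: "real^'n^'n \<Rightarrow> bool" where
  "pos_def Q \<longleftrightarrow> (\<forall>x. x \<noteq> 0 \<longrightarrow> x \<bullet> (Q *v x) > 0)"

definition spec_norm :: "real^'n^'n \<Rightarrow> real" where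
  "spec_norm Q = onorm (\<lambda>x. Q *v x)"

definition is_kkt :: "real^'n^'n \<Rightarrow> real^'n \<Rightarrow> real^'n \<Rightarrow> real^'n \<Rightarrow> 'n set \<Rightarrow> 'n set
    \<Rightarrow> real^'n \<Rightarrow> real^'n \<Rightarrow> real^'n \<Rightarrow> bool" where
  "is_kkt Q d a b A1 A2 x s t \<longleftrightarrow>
     (\<forall>i\<in>A1. x$i = b$i) \<and> (\<forall>i\<in>A2. x$i = a$i) \<and>
     (\<forall>i. i \<notin> A1 \<longrightarrow> s$i = 0) \<and> (\<forall>i. i \<notin> A2 \<longrightarrow> t$i = 0) \<and>
     Q *v x + d + s + t = 0"

definition Jfun :: "real^'n^'n \<Rightarrow> real^'n \<Rightarrow> real^'n \<Rightarrow> real" where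
  "Jfun Q d x = (1/2) * (x \<bullet> (Q *v x)) + d \<bullet> x"

definition gfun :: "real^'n \<Rightarrow> real^'n \<Rightarrow> real^'n" where
  "gfun b x = (\<chi> i. max (b$i - x$i) 0)"

definition hfun :: "real^'n \<Rightarrow> real^'n \<Rightarrow> real^'n" where
  "hfun a x = (\<chi> i. max (x$i - a$i) 0)"

text \<open>Merit function L_{c,d}(x,s,t) (independent of s,t).\<close>
definition merit :: "real^'n^'n \<Rightarrow> real^'n \<Rightarrow> real^'n \<Rightarrow> real^'n \<Rightarrow> real \<Rightarrow> real
    \<Rightarrow> real^'n \<Rightarrow> real^'n \<Rightarrow> real^'n \<Rightarrow> real" where
  "merit Q dt a b c d x s t =
     Jfun Q dt x + c/2 * (norm (gfun b x))\<^sup>2 + d/2 * (norm (hfun a x))\<^sup>2"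

definition subnorm :: "'n set \<Rightarrow> real^'n \<Rightarrow> real" where
  "subnorm M z = sqrt (\<Sum>i\<in>M. (z$i)\<^sup>2)"

end

theory Submission imports Defs begin

text \<open>Write \<open>z = y - x\<close> and split it as \<open>z = w + w'\<close> into its parts on \<open>W\<close> and off \<open>W\<close>.
The multipliers \<open>s + t\<close> of the first KKT system live on \<open>A \<union> B\<close>, which misses \<open>W\<close>, and \<open>z\<close>
vanishes wherever the multipliers \<open>u + v\<close> of the second system live outside \<open>W\<close>. Since
\<open>Q z = (s + t) - (u + v)\<close>, the expansion of the quadratic objective collapses to the exact
identity \<open>2 (J y - J x) = w\<^sup>T Q w - w'\<^sup>T Q w'\<close>, which the Rayleigh bounds turn into
\<open>\<parallel>Q\<parallel> \<parallel>w\<parallel>\<^sup>2 - \<mu> \<parallel>w'\<parallel>\<^sup>2\<close>. The penalty terms are compared coordinatewise: \<open>x\<close> violates its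
bounds exactly on \<open>U\<close> and \<open>V\<close>, where \<open>y\<close> sits on the violated bound, while \<open>y\<close> can only violate
a bound at an index of \<open>K\<close> or \<open>L\<close>, where \<open>x\<close> satisfies it.\<close>

lemma symmetric_inner_matrix_vector:
  fixes Q :: "real^'n^'n"
  assumes "transpose Q = Q"
  shows "x \<bullet> (Q *v y) = y \<bullet> (Q *v x)"
proof -
  have "x \<bullet> (Q *v y) = (transpose Q *v x) \<bullet> y" by (simp add: dot_lmul_matrix)
  then show ?thesis using assms by (simp add: inner_commute)
qed

lemma quadratic_form_add:
  fixes Q :: "real^'n^'n"
  assumes "transpose Q = Q"
  shows "(x + h) \<bullet> (Q *v (x + h)) = x \<bullet> (Q *v x) + 2 * (h \<bullet> (Q *v x)) + h \<bullet> (Q *v h)"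
  using symmetric_inner_matrix_vector[OF assms, of x h]
  by (simp add: matrix_vector_right_distrib inner_add_left inner_add_right)

lemma quadratic_form_le_spec_norm:
  fixes Q :: "real^'n^'n"
  shows "x \<bullet> (Q *v x) \<le> spec_norm Q * (norm x)\<^sup>2"
proof -
  have "x \<bullet> (Q *v x) \<le> norm x * norm (Q *v x)"
    by (metis Cauchy_Schwarz_ineq2 abs_le_D1)
  also have "\<dots> \<le> norm x * (spec_norm Q * norm x)"
    unfolding spec_norm_def by (intro mult_left_mono onorm) simp_all
  finally show ?thesis by (simp add: power2_eq_square algebra_simps)
qed

lemma quadratic_form_min_on_sphere:
  fixes Q :: "real^'n^'n"
  obtains v where "norm v = 1" "\<And>y. v \<bullet> (Q *v v) * (norm y)\<^sup>2 \<le> y \<bullet> (Q *v y)"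
proof -
  define f where "f y = y \<bullet> (Q *v y)" for y :: "real^'n"
  have "continuous_on (sphere 0 1) f"
    unfolding f_def by (intro continuous_intros linear_continuous_on) simp
  moreover have "sphere (0::real^'n) 1 \<noteq> {}"
    using norm_axis_1[of undefined] by (metis mem_sphere_0 empty_iff)
  ultimately obtain v where v: "norm v = 1" and vmin: "\<And>y. norm y = 1 \<Longrightarrow> f v \<le> f y"
    using continuous_attains_inf[OF compact_sphere] by (metis mem_sphere_0)
  have "f v * (norm y)\<^sup>2 \<le> f y" for y
  proof (cases "y = 0")
    case False
    then have "f v \<le> f (y /\<^sub>R norm y)" by (intro vmin) simp
    also have "\<dots> = f y / (norm y)\<^sup>2"
      by (simp add: f_def matrix_vector_mult_scaleR power2_eq_square divide_inverse)
    finally show ?thesis using False by (simp add: field_simps)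
  qed (simp add: f_def)
  with v that show ?thesis by (simp add: f_def)
qed

lemma nonneg_quadratic_imp_linear_coeff_zero:
  fixes a b :: real
  assumes "\<And>e. 2 * e * a \<le> e\<^sup>2 * b"
  shows "a = 0"
proof (cases "b \<le> 0")
  case True
  have "2 * a\<^sup>2 \<le> a\<^sup>2 * b" using assms[of a] by (simp add: power2_eq_square)
  also have "\<dots> \<le> 0" using True by (simp add: mult_nonneg_nonpos)
  finally show ?thesis by simp
next
  case False
  have "2 * a\<^sup>2 / b \<le> a\<^sup>2 / b" using assms[of "a / b"] False
    by (simp add: power2_eq_square field_simps)
  then have "a\<^sup>2 / b \<le> 0" by simp
  then show ?thesis using False by (simp add: divide_le_0_iff)
qed

text \<open>A minimiser of the Rayleigh quotient is an eigenvector: moving from it in the direction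
of the residual \<open>r = Q v - m v\<close> changes the nonnegative form \<open>y\<^sup>T Q y - m \<parallel>y\<parallel>\<^sup>2\<close> by
\<open>-2 e \<parallel>r\<parallel>\<^sup>2 + O(e\<^sup>2)\<close>.\<close>

lemma quadratic_form_minimizer_eigenvector:
  fixes Q :: "real^'n^'n"
  assumes sym: "transpose Q = Q"
    and lower: "\<And>y. m * (norm y)\<^sup>2 \<le> y \<bullet> (Q *v y)"
    and attained: "v \<bullet> (Q *v v) = m * (norm v)\<^sup>2"
  shows "Q *v v = m *\<^sub>R v"
proof -
  define p where "p y = y \<bullet> (Q *v y) - m * (norm y)\<^sup>2" for y
  define r where "r = Q *v v - m *\<^sub>R v"
  have p_add: "p (v + h) = p v + 2 * (h \<bullet> r) + p h" for h
    unfolding p_def r_def quadratic_form_add[OF sym] power2_norm_eq_inner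
    by (simp add: inner_add_left inner_add_right inner_diff_right inner_commute algebra_simps)
  have "2 * e * (r \<bullet> r) \<le> e\<^sup>2 * p r" for e
  proof -
    have "0 \<le> p (v + (- e) *\<^sub>R r)" using lower[of "v + (- e) *\<^sub>R r"] by (simp add: p_def)
    also have "\<dots> = p v + 2 * ((- e) *\<^sub>R r \<bullet> r) + p ((- e) *\<^sub>R r)" by (rule p_add)
    also have "\<dots> = - 2 * e * (r \<bullet> r) + e\<^sup>2 * p r"
      using attained by (simp add: p_def matrix_vector_mult_scaleR vec.neg power2_eq_square algebra_simps)
    finally show ?thesis by simp
  qed
  then have "r \<bullet> r = 0" by (rule nonneg_quadratic_imp_linear_coeff_zero)
  then show ?thesis by (simp add: r_def)
qed

lemma quadratic_form_ge_smallest_eigenvalue: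
  fixes Q :: "real^'n^'n"
  assumes sym: "transpose Q = Q" and mu: "smallest_eigenvalue Q \<mu>"
  shows "\<mu> * (norm x)\<^sup>2 \<le> x \<bullet> (Q *v x)"
proof -
  obtain v where v: "norm v = 1" and vmin: "\<And>y. v \<bullet> (Q *v v) * (norm y)\<^sup>2 \<le> y \<bullet> (Q *v y)"
    using quadratic_form_min_on_sphere[of Q] by blast
  define m where "m = v \<bullet> (Q *v v)"
  have "Q *v v = m *\<^sub>R v"
    using v vmin by (intro quadratic_form_minimizer_eigenvector[OF sym]) (simp_all add: m_def)
  then have "is_eigenvalue Q m" unfolding is_eigenvalue_def using v by (intro exI[of _ v]) auto
  then have "\<mu> \<le> m" using mu unfolding smallest_eigenvalue_def by blast
  then have "\<mu> * (norm x)\<^sup>2 \<le> m * (norm x)\<^sup>2" by (simp add: mult_right_mono)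
  also have "\<dots> \<le> x \<bullet> (Q *v x)" using vmin by (simp add: m_def)
  finally show ?thesis .
qed

lemma Jfun_diff_split:
  fixes Q :: "real^'n^'n"
  assumes sym: "transpose Q = Q"
    and grad_x: "Q *v x + d = - p" and grad_y: "Q *v y + d = - q"
    and z_split: "w + w' = y - x" and w_perp: "w \<bullet> p = 0" and w'_perp: "w' \<bullet> q = 0"
  shows "2 * (Jfun Q d y - Jfun Q d x) = w \<bullet> (Q *v w) - w' \<bullet> (Q *v w')"
proof -
  define z where "z = y - x"
  have zw: "z = w + w'" using z_split by (simp add: z_def)
  have "Q *v x = - p - d" "Q *v y = - q - d"
    using grad_x grad_y by (metis add_diff_cancel_right')+
  then have "Q *v z = p - q" by (simp add: z_def matrix_vector_mult_diff_distrib)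
  have "z \<bullet> p = (w + w') \<bullet> p" by (simp add: zw)
  also have "\<dots> = w' \<bullet> (Q *v z + q)"
    using \<open>Q *v z = p - q\<close> w_perp by (simp add: inner_add_left)
  also have "\<dots> = w' \<bullet> (Q *v z)" using w'_perp by (simp add: inner_add_right)
  also have "\<dots> = w' \<bullet> (Q *v w) + w' \<bullet> (Q *v w')"
    by (simp add: zw matrix_vector_right_distrib inner_add_right)
  finally have zp: "z \<bullet> p = w' \<bullet> (Q *v w) + w' \<bullet> (Q *v w')" .
  have "y \<bullet> (Q *v y) = x \<bullet> (Q *v x) + 2 * (z \<bullet> (Q *v x)) + z \<bullet> (Q *v z)"
    using quadratic_form_add[OF sym, of x z] by (simp add: z_def)
  moreover have "d \<bullet> y = d \<bullet> x + z \<bullet> d" by (simp add: z_def inner_diff_right inner_commute)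
  ultimately have "Jfun Q d y - Jfun Q d x = z \<bullet> (Q *v x + d) + (1/2) * (z \<bullet> (Q *v z))"
    by (simp add: Jfun_def inner_add_right algebra_simps)
  then have "2 * (Jfun Q d y - Jfun Q d x) = z \<bullet> (Q *v z) - 2 * (z \<bullet> p)"
    using grad_x by simp
  also have "z \<bullet> (Q *v z) = w \<bullet> (Q *v w) + 2 * (w' \<bullet> (Q *v w)) + w' \<bullet> (Q *v w')"
    unfolding zw by (rule quadratic_form_add[OF sym])
  finally show ?thesis using zp by simp
qed

definition vec_restrict :: "'n set \<Rightarrow> real^'n \<Rightarrow> real^'n" where
  "vec_restrict M z = (\<chi> i. if i \<in> M then z$i else 0)"

lemma vec_restrict_add_compl: "vec_restrict M z + vec_restrict (- M) z = z"
  by (simp add: vec_restrict_def vec_eq_iff)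

lemma inner_vec_restrict_eq_0:
  assumes "\<And>i. i \<in> M \<Longrightarrow> z$i * p$i = 0"
  shows "vec_restrict M z \<bullet> p = 0"
  unfolding inner_vec_def vec_restrict_def using assms by (simp add: sum.neutral)

lemma norm_sq_eq_sum_sq: "(norm (x :: real^'n))\<^sup>2 = (\<Sum>i\<in>UNIV. (x$i)\<^sup>2)"
  unfolding power2_norm_eq_inner inner_vec_def by (simp add: power2_eq_square)

lemma subnorm_sq_eq_sum_if: "(subnorm M z)\<^sup>2 = (\<Sum>i\<in>UNIV. if i \<in> M then (z$i)\<^sup>2 else 0)"
  unfolding subnorm_def by (simp add: sum_nonneg sum.If_cases)

lemma norm_vec_restrict_sq: "(norm (vec_restrict M z))\<^sup>2 = (subnorm M z)\<^sup>2"
  unfolding norm_sq_eq_sum_sq subnorm_sq_eq_sum_if vec_restrict_def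
  by (intro sum.cong) auto

lemma norm_gfun_sq_le_subnorm:
  assumes "\<And>i. y$i < b$i \<Longrightarrow> i \<in> K \<and> b$i \<le> x$i"
  shows "(norm (gfun b y))\<^sup>2 \<le> (subnorm K (y - x))\<^sup>2"
  unfolding norm_sq_eq_sum_sq subnorm_sq_eq_sum_if
proof (intro sum_mono)
  fix i
  show "(gfun b y $ i)\<^sup>2 \<le> (if i \<in> K then ((y - x)$i)\<^sup>2 else 0)"
  proof (cases "y$i < b$i")
    case True
    then have "(b$i - y$i)\<^sup>2 \<le> (x$i - y$i)\<^sup>2" using assms by (intro power_mono) auto
    then show ?thesis using True assms by (simp add: gfun_def power2_commute)
  qed (simp add: gfun_def)
qed

lemma norm_hfun_sq_le_subnorm:
  assumes "\<And>i. a$i < y$i \<Longrightarrow> i \<in> L \<and> x$i \<le> a$i"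
  shows "(norm (hfun a y))\<^sup>2 \<le> (subnorm L (y - x))\<^sup>2"
  unfolding norm_sq_eq_sum_sq subnorm_sq_eq_sum_if
proof (intro sum_mono)
  fix i
  show "(hfun a y $ i)\<^sup>2 \<le> (if i \<in> L then ((y - x)$i)\<^sup>2 else 0)"
  proof (cases "a$i < y$i")
    case True
    then have "(y$i - a$i)\<^sup>2 \<le> (y$i - x$i)\<^sup>2" using assms by (intro power_mono) auto
    then show ?thesis using True assms by (simp add: hfun_def)
  qed (simp add: hfun_def)
qed

lemma norm_gfun_sq_eq_subnorm:
  assumes "\<And>i. i \<in> U \<longleftrightarrow> x$i < b$i" and "\<And>i. i \<in> U \<Longrightarrow> y$i = b$i"
  shows "(norm (gfun b x))\<^sup>2 = (subnorm U (y - x))\<^sup>2"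
  unfolding norm_sq_eq_sum_sq subnorm_sq_eq_sum_if
  using assms by (intro sum.cong) (auto simp: gfun_def)

lemma norm_hfun_sq_eq_subnorm:
  assumes "\<And>i. i \<in> V \<longleftrightarrow> a$i < x$i" and "\<And>i. i \<in> V \<Longrightarrow> y$i = a$i"
  shows "(norm (hfun a x))\<^sup>2 = (subnorm V (y - x))\<^sup>2"
  unfolding norm_sq_eq_sum_sq subnorm_sq_eq_sum_if
  using assms by (intro sum.cong) (auto simp: hfun_def power2_commute)

lemma kkt_Jfun_diff_le:
  fixes Q :: "real^'n^'n"
  assumes sym: "transpose Q = Q" and mu: "smallest_eigenvalue Q \<mu>"
    and kkt_x: "is_kkt Q d a b A1 A2 x s t" and kkt_y: "is_kkt Q d a b C D y u v"
    and W_free: "W \<inter> (A1 \<union> A2) = {}"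
    and agree: "\<And>i. i \<in> C \<union> D \<Longrightarrow> i \<notin> W \<Longrightarrow> y$i = x$i"
  shows "2 * (Jfun Q d y - Jfun Q d x)
    \<le> spec_norm Q * (subnorm W (y - x))\<^sup>2 - \<mu> * (subnorm (- W) (y - x))\<^sup>2"
proof -
  define w where "w = vec_restrict W (y - x)"
  define w' where "w' = vec_restrict (- W) (y - x)"
  have "Q *v x + d = - (s + t)" "Q *v y + d = - (u + v)"
    using kkt_x kkt_y unfolding is_kkt_def eq_neg_iff_add_eq_0 by (simp_all add: add.assoc)
  moreover have "w \<bullet> (s + t) = 0"
    unfolding w_def
  proof (rule inner_vec_restrict_eq_0)
    fix i assume "i \<in> W"
    then have "i \<notin> A1" "i \<notin> A2" using W_free by auto
    then show "(y - x)$i * (s + t)$i = 0" using kkt_x by (simp add: is_kkt_def)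
  qed
  moreover have "w' \<bullet> (u + v) = 0"
    unfolding w'_def
  proof (rule inner_vec_restrict_eq_0)
    fix i assume "i \<in> - W"
    then show "(y - x)$i * (u + v)$i = 0"
      using agree[of i] kkt_y by (cases "i \<in> C \<union> D") (auto simp: is_kkt_def)
  qed
  ultimately have "2 * (Jfun Q d y - Jfun Q d x) = w \<bullet> (Q *v w) - w' \<bullet> (Q *v w')"
    by (intro Jfun_diff_split[OF sym]) (simp_all add: w_def w'_def vec_restrict_add_compl)
  also have "\<dots> \<le> spec_norm Q * (norm w)\<^sup>2 - \<mu> * (norm w')\<^sup>2"
    using quadratic_form_le_spec_norm quadratic_form_ge_smallest_eigenvalue[OF sym mu]
    by (intro diff_mono)
  finally show ?thesis by (simp add: w_def w'_def norm_vec_restrict_sq)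
qed

theorem mainTheorem4:
  fixes Q :: "real^'n^'n" and dt a b x s t y u v z :: "real^'n"
    and \<mu> :: real and A B C D S T U V W R K L :: "'n set"
  assumes symQ: "transpose Q = Q"
    and pdQ: "pos_def Q"
    and mu: "smallest_eigenvalue Q \<mu>"
    and ba: "\<forall>i. b$i \<le> a$i"
    and AB: "A \<inter> B = {}"
    and kkt1: "is_kkt Q dt a b A B x s t"
    and C_def: "C = {i. x$i < b$i \<or> s$i < 0}"
    and D_def: "D = {i. x$i > a$i \<or> t$i > 0}"
    and kkt2: "is_kkt Q dt a b C D y u v"
    and S_def: "S = {i\<in>A. s$i \<ge> 0}"
    and T_def: "T = {i\<in>B. t$i \<le> 0}"
    and U_def: "U = {i\<in>UNIV - (A \<union> B). x$i < b$i}"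
    and V_def: "V = {i\<in>UNIV - (A \<union> B). x$i > a$i}"
    and W_def: "W = U \<union> V"
    and R_def: "R = (UNIV - (A \<union> B)) - W"
    and K_def: "K = {i\<in>S \<union> T \<union> R. y$i < b$i}"
    and L_def: "L = {i\<in>S \<union> T \<union> R. y$i > a$i}"
    and z_def: "z = y - x"
  shows "\<forall>c d. c \<ge> 0 \<longrightarrow> d \<ge> 0 \<longrightarrow>
    2 * (merit Q dt a b c d y u v - merit Q dt a b c d x s t)
      \<le> spec_norm Q * (subnorm W z)\<^sup>2 - \<mu> * (subnorm (UNIV - W) z)\<^sup>2
         + c * (subnorm K z)\<^sup>2 + d * (subnorm L z)\<^sup>2
         - c * (subnorm U z)\<^sup>2 - d * (subnorm V z)\<^sup>2"
proof (intro allI impI)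
  fix c d :: real
  assume "c \<ge> 0" "d \<ge> 0"
  have x_A: "\<And>i. i \<in> A \<Longrightarrow> x$i = b$i" and x_B: "\<And>i. i \<in> B \<Longrightarrow> x$i = a$i"
    and s_A: "\<And>i. i \<notin> A \<Longrightarrow> s$i = 0" and t_B: "\<And>i. i \<notin> B \<Longrightarrow> t$i = 0"
    using kkt1 unfolding is_kkt_def by auto
  have y_C: "\<And>i. i \<in> C \<Longrightarrow> y$i = b$i" and y_D: "\<And>i. i \<in> D \<Longrightarrow> y$i = a$i"
    using kkt2 unfolding is_kkt_def by auto
  have agree: "y$i = x$i" if "i \<in> C \<union> D" "i \<notin> W" for i
    using that x_A x_B s_A t_B y_C y_D AB ba[rule_format, of i]
    unfolding C_def D_def W_def U_def V_def by (cases "i \<in> A"; cases "i \<in> B") force+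
  have inside: "b$i \<le> x$i \<and> x$i \<le> a$i \<and> i \<in> S \<union> T \<union> R" if "i \<notin> C" "i \<notin> D" for i
    using that unfolding C_def D_def S_def T_def R_def W_def U_def V_def by auto
  have W_free: "W \<inter> (A \<union> B) = {}" unfolding W_def U_def V_def by auto
  have J: "2 * (Jfun Q dt y - Jfun Q dt x)
      \<le> spec_norm Q * (subnorm W z)\<^sup>2 - \<mu> * (subnorm (UNIV - W) z)\<^sup>2"
    using kkt_Jfun_diff_le[OF symQ mu kkt1 kkt2 W_free agree] unfolding z_def Compl_eq_Diff_UNIV .
  have feasible_y: "i \<notin> C \<and> i \<notin> D" if "y$i < b$i \<or> a$i < y$i" for i
    using that y_C y_D ba[rule_format, of i] by force
  have free_x: "i \<notin> A \<and> i \<notin> B" if "x$i < b$i \<or> a$i < x$i" for i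
    using that x_A x_B ba[rule_format, of i] by force
  have "(norm (gfun b y))\<^sup>2 \<le> (subnorm K z)\<^sup>2"
    unfolding z_def using feasible_y inside by (intro norm_gfun_sq_le_subnorm) (auto simp: K_def)
  moreover have "(norm (hfun a y))\<^sup>2 \<le> (subnorm L z)\<^sup>2"
    unfolding z_def using feasible_y inside by (intro norm_hfun_sq_le_subnorm) (auto simp: L_def)
  moreover have "(norm (gfun b x))\<^sup>2 = (subnorm U z)\<^sup>2"
    unfolding z_def using free_x y_C by (intro norm_gfun_sq_eq_subnorm) (auto simp: U_def C_def)
  moreover have "(norm (hfun a x))\<^sup>2 = (subnorm V z)\<^sup>2"
    unfolding z_def using free_x y_D by (intro norm_hfun_sq_eq_subnorm) (auto simp: V_def D_def)
  ultimately have "c * ((norm (gfun b y))\<^sup>2 - (norm (gfun b x))\<^sup>2)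
        \<le> c * ((subnorm K z)\<^sup>2 - (subnorm U z)\<^sup>2)"
    and "d * ((norm (hfun a y))\<^sup>2 - (norm (hfun a x))\<^sup>2)
        \<le> d * ((subnorm L z)\<^sup>2 - (subnorm V z)\<^sup>2)"
    using \<open>c \<ge> 0\<close> \<open>d \<ge> 0\<close> by (simp_all add: mult_left_mono)
  with J show "2 * (merit Q dt a b c d y u v - merit Q dt a b c d x s t)
      \<le> spec_norm Q * (subnorm W z)\<^sup>2 - \<mu> * (subnorm (UNIV - W) z)\<^sup>2
         + c * (subnorm K z)\<^sup>2 + d * (subnorm L z)\<^sup>2
         - c * (subnorm U z)\<^sup>2 - d * (subnorm V z)\<^sup>2"
    unfolding merit_def by (simp add: algebra_simps)
qed

end
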